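(* Let $\Omega$ be a compact Hausdorff space, let $E\subset \Omega$ be a closed set, and let $J=\{f\in C(\Omega): f(e)=0 \text{ for all } e\in E\}$. Then the pair $(C(\Omega),J)$ has the compact quotient lifting property (CQLP).
   Context: $C(\Omega)$ denotes the Banach space of real-valued continuous functions on $\Omega$ with the supremum norm. For a Banach space $X$ and a closed subspace $J\subset X$, let $\pi:X\to X/J$ be the quotient map. The pair $(X,J)$ has the compact quotient lifting property (CQLP) if for every Banach space $Z$ and every compact linear operator $T:Z\to X/J$ there is a compact linear operator $S:Z\to X$ with $\pi\circ S=T$ and $\|S\|=\|T\|$. *)

theory Defs
  imports "HOL-Analysis.Analysis"
begin

text \<open>The quotient X/J of a normed space X by a closed subspace J is modelled by the
cosets x + J (sets of representatives).\<close>

definition coset :: "'x::real_normed_vector set \<Rightarrow> 'x \<Rightarrow> 'x set" where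
  "coset J x = (\<lambda>j. x + j) ` J"

definition qnorm :: "'x::real_normed_vector set \<Rightarrow> real" where
  "qnorm A = (INF a\<in>A. norm a)"

definition qdist :: "'x::real_normed_vector set \<Rightarrow> 'x set \<Rightarrow> real" where
  "qdist A B = (INF p\<in>A \<times> B. norm (fst p - snd p))"

definition quot_linear :: "'x::real_normed_vector set \<Rightarrow> ('z::real_normed_vector \<Rightarrow> 'x set) \<Rightarrow> bool" where
  "quot_linear J T \<longleftrightarrow>
     (\<forall>z. T z \<in> range (coset J)) \<and>
     (\<forall>z w a b x y. x \<in> T z \<longrightarrow> y \<in> T w \<longrightarrow> a *\<^sub>R x + b *\<^sub>R y \<in> T (a *\<^sub>R z + b *\<^sub>R w))"

definition quot_compact_op :: "'x::real_normed_vector set \<Rightarrow> ('z::real_normed_vector \<Rightarrow> 'x set) \<Rightarrow> bool" where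
  "quot_compact_op J T \<longleftrightarrow> quot_linear J T \<and>
     (\<forall>s::nat \<Rightarrow> 'z. (\<forall>n. norm (s n) \<le> 1) \<longrightarrow>
        (\<exists>r L. strict_mono r \<and> L \<in> range (coset J) \<and>
               (\<lambda>n. qdist (T (s (r n))) L) \<longlonglongrightarrow> 0))"

definition quot_opnorm :: "('z::real_normed_vector \<Rightarrow> 'x::real_normed_vector set) \<Rightarrow> real" where
  "quot_opnorm T = (SUP z\<in>cball 0 1. qnorm (T z))"

definition compact_op :: "('z::real_normed_vector \<Rightarrow> 'x::real_normed_vector) \<Rightarrow> bool" where
  "compact_op S \<longleftrightarrow> bounded_linear S \<and> compact (closure (S ` cball 0 1))"

definition vanishing_ideal :: "'a::topological_space set \<Rightarrow> ('a \<Rightarrow>\<^sub>C real) set" where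
  "vanishing_ideal E = {f. \<forall>e\<in>E. apply_bcontfun f e = 0}"

end

theory Submission
  imports Defs
begin

text \<open>Compactness of T makes it determined by a continuous family of functionals on E:
for e \<in> E, evaluating a representative of T z at e is a bounded functional \<phi>(e) on Z with
norm at most the quotient norm of T, and total boundedness of the image of the unit ball
makes e \<mapsto> \<phi>(e) continuous into the dual of Z. A Tietze extension theorem for maps into a
Banach space (successive approximation by partitions of unity, then a radial retraction)
extends \<phi> to a continuous \<Phi> on \<Omega> with the same bound. The lift is S z = (x \<mapsto> \<Phi>(x) z):
it is compact because \<Phi>(\<Omega>) is compact, its norm is at most sup \<parallel>\<Phi>\<parallel>, and it is at least
the quotient norm of T because S z \<in> T z.\<close>

section \<open>Banach-valued Tietze extension on compact Hausdorff spaces\<close>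

lemma normal_space_compact_t2:
  assumes "compact (UNIV::'a::t2_space set)"
  shows "normal_space (euclidean::'a topology)"
proof (rule compact_Hausdorff_or_regular_imp_normal_space)
  show "compact_space (euclidean::'a topology)"
    using assms by (simp add: compact_space_def)
  show "Hausdorff_space (euclidean::'a topology) \<or> regular_space euclidean"
    unfolding Hausdorff_space_def by (metis disjnt_def hausdorff open_openin)
qed

lemma Tietze_extension_compact_t2:
  fixes f :: "'a::t2_space \<Rightarrow> real"
  assumes "compact (UNIV::'a set)" "closed E" "continuous_on E f"
    and "\<And>x. x \<in> E \<Longrightarrow> a \<le> f x \<and> f x \<le> b" "a \<le> b"
  obtains g where "continuous_on UNIV g" "\<And>x. x \<in> E \<Longrightarrow> g x = f x" "\<And>x. a \<le> g x \<and> g x \<le> b"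
proof -
  have "f ` E \<subseteq> {a..b}" using assms(4) by auto
  then obtain g where "continuous_map euclidean euclideanreal g"
      "\<And>x. x \<in> E \<Longrightarrow> g x = f x" "g ` topspace euclidean \<subseteq> {a..b}"
    using Tietze_extension_closed_real_interval normal_space_compact_t2 assms
    by (metis closed_closedin continuous_map_iff_continuous)
  then show ?thesis using that by (simp add: image_subset_iff)
qed

lemma norm_diff_weighted_mean_le:
  fixes v :: "'i \<Rightarrow> 'b::real_normed_vector"
  assumes "finite W" "\<And>i. i \<in> W \<Longrightarrow> 0 \<le> w i" "0 < sum w W"
    and close: "\<And>i. i \<in> W \<Longrightarrow> w i \<noteq> 0 \<Longrightarrow> norm (y - v i) \<le> \<delta>"
  shows "norm (y - (\<Sum>i\<in>W. w i *\<^sub>R v i) /\<^sub>R sum w W) \<le> \<delta>"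
proof -
  obtain j where "j \<in> W" "w j \<noteq> 0"
    using \<open>0 < sum w W\<close> by (metis less_irrefl sum.neutral)
  then have "0 \<le> \<delta>" using close[of j] norm_ge_zero order_trans by blast
  define v' where "v' i = (if w i = 0 then y else v i)" for i
  have "(\<Sum>i\<in>W. (w i / sum w W) *\<^sub>R v' i) \<in> cball y \<delta>"
  proof (rule convex_sum[OF \<open>finite W\<close> convex_cball])
    show "(\<Sum>i\<in>W. w i / sum w W) = 1"
      using \<open>0 < sum w W\<close> by (simp add: sum_divide_distrib[symmetric])
    show "v' i \<in> cball y \<delta>" if "i \<in> W" for i
      using close[OF that] \<open>0 \<le> \<delta>\<close> by (auto simp: v'_def dist_norm)
  qed (use assms(2,3) in auto)
  moreover have "(\<Sum>i\<in>W. (w i / sum w W) *\<^sub>R v' i) = (\<Sum>i\<in>W. w i *\<^sub>R v i) /\<^sub>R sum w W"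
    unfolding scaleR_sum_right by (intro sum.cong) (auto simp: v'_def divide_inverse_commute)
  ultimately show ?thesis by (simp add: dist_norm)
qed

lemma norm_weighted_sum_le:
  fixes v :: "'i \<Rightarrow> 'b::real_normed_vector"
  assumes "finite W" "\<And>i. i \<in> W \<Longrightarrow> 0 \<le> w i" "sum w W \<le> t" "0 < t"
    and "0 \<le> B" "\<And>i. i \<in> W \<Longrightarrow> norm (v i) \<le> B"
  shows "norm ((\<Sum>i\<in>W. w i *\<^sub>R v i) /\<^sub>R t) \<le> B"
proof -
  have "norm (\<Sum>i\<in>W. w i *\<^sub>R v i) \<le> (\<Sum>i\<in>W. w i * B)"
    by (rule order_trans[OF norm_sum sum_mono]) (simp add: assms(2,6) mult_left_mono)
  also have "\<dots> \<le> t * B"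
    using assms(3,5) by (simp add: sum_distrib_right[symmetric] mult_right_mono)
  finally show ?thesis using \<open>0 < t\<close> by (simp add: field_simps)
qed

lemma continuous_approximation_closed:
  fixes g :: "'a::t2_space \<Rightarrow> 'b::real_normed_vector"
  assumes cU: "compact (UNIV::'a set)" and cE: "closed E" and cg: "continuous_on E g"
    and gb: "\<And>e. e \<in> E \<Longrightarrow> norm (g e) \<le> B" and "0 \<le> B" and "0 < \<delta>"
  obtains h where "continuous_on UNIV h" "\<And>x. norm (h x) \<le> B"
    "\<And>e. e \<in> E \<Longrightarrow> norm (g e - h e) \<le> \<delta>"
proof (cases "E = {}")
  case True
  then show thesis using that[of "\<lambda>x. 0"] \<open>0 \<le> B\<close> by auto
next
  case False
  have compE: "compact E" using compact_Int_closed[OF cU cE] by simp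
  have "compact (g ` E)" by (rule compact_continuous_image[OF cg compE])
  then obtain W where W: "finite W" "W \<subseteq> g ` E" "g ` E \<subseteq> (\<Union>v\<in>W. ball v \<delta>)"
    using seq_compact_imp_totally_bounded[OF compact_imp_seq_compact] \<open>0 < \<delta>\<close> by metis
  have "\<forall>v\<in>W. \<exists>f. continuous_on UNIV f \<and> (\<forall>e\<in>E. f e = max 0 (\<delta> - norm (g e - v))) \<and> (\<forall>x. 0 \<le> f x)"
  proof
    fix v
    have c: "continuous_on E (\<lambda>e. max 0 (\<delta> - norm (g e - v)))" by (intro continuous_intros cg)
    have b: "0 \<le> max 0 (\<delta> - norm (g e - v)) \<and> max 0 (\<delta> - norm (g e - v)) \<le> \<delta>" for e
      using \<open>0 < \<delta>\<close> by auto
    obtain f where "continuous_on UNIV f" "\<And>e. e \<in> E \<Longrightarrow> f e = max 0 (\<delta> - norm (g e - v))"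
        "\<And>x. 0 \<le> f x \<and> f x \<le> \<delta>"
      using Tietze_extension_compact_t2[OF cU cE c b] \<open>0 < \<delta>\<close> less_imp_le by blast
    then show "\<exists>f. continuous_on UNIV f \<and> (\<forall>e\<in>E. f e = max 0 (\<delta> - norm (g e - v))) \<and> (\<forall>x. 0 \<le> f x)"
      by blast
  qed
  then obtain w where w: "\<And>v. v \<in> W \<Longrightarrow> continuous_on UNIV (w v)"
      "\<And>v e. v \<in> W \<Longrightarrow> e \<in> E \<Longrightarrow> w v e = max 0 (\<delta> - norm (g e - v))"
      "\<And>v x. v \<in> W \<Longrightarrow> 0 \<le> w v x"
    by metis
  define s where "s x = (\<Sum>v\<in>W. w v x)" for x
  have s_pos: "0 < s e" if "e \<in> E" for e
  proof -
    obtain v where v: "v \<in> W" "g e \<in> ball v \<delta>" using W(3) \<open>e \<in> E\<close> by auto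
    then have "0 < w v e" using w(2) that by (simp add: dist_norm norm_minus_commute)
    also have "w v e \<le> s e" unfolding s_def using W(1) v(1) w(3) by (intro member_le_sum) auto
    finally show ?thesis .
  qed
  have "continuous_on UNIV s" unfolding s_def by (intro continuous_on_sum w(1))
  then obtain e0 where e0: "e0 \<in> E" "\<And>e. e \<in> E \<Longrightarrow> s e0 \<le> s e"
    using continuous_attains_inf[OF compE False] continuous_on_subset by blast
  define m where "m = s e0"
  have "0 < m" using s_pos e0 m_def by auto
  \<comment> \<open>the weights w v form a partition of unity on E after dividing by s; the cut-off at m
    keeps the denominator positive off E without changing it on E\<close>
  define h where "h x = (\<Sum>v\<in>W. w v x *\<^sub>R v) /\<^sub>R max (s x) m" for x
  show thesis
  proof (rule that)
    have "max (s x) m \<noteq> 0" for x using \<open>0 < m\<close> by linarith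
    then show "continuous_on UNIV h"
      unfolding h_def s_def by (intro continuous_intros w(1)) auto
    show "norm (h x) \<le> B" for x
      unfolding h_def
    proof (rule norm_weighted_sum_le[where w = "\<lambda>v. w v x" and v = "\<lambda>v. v"])
      show "norm v \<le> B" if "v \<in> W" for v using W(2) gb that by auto
    qed (use W(1) w(3) \<open>0 < m\<close> \<open>0 \<le> B\<close> in \<open>auto simp: s_def\<close>)
    fix e assume e: "e \<in> E"
    have "max (s e) m = s e" using e0 e m_def by auto
    then have "h e = (\<Sum>v\<in>W. w v e *\<^sub>R v) /\<^sub>R (\<Sum>v\<in>W. w v e)" by (simp add: h_def s_def)
    then show "norm (g e - h e) \<le> \<delta>"
    proof (simp only:, intro norm_diff_weighted_mean_le[where w = "\<lambda>v. w v e" and v = "\<lambda>v. v"])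
      show "norm (g e - v) \<le> \<delta>" if "v \<in> W" "w v e \<noteq> 0" for v
        using w(2)[OF that(1) e] that(2) by (auto simp: max_def split: if_splits)
    qed (use W(1) w(3) s_pos[OF e] in \<open>auto simp: s_def\<close>)
  qed
qed

lemma continuous_approximation_sequence_closed:
  fixes g :: "'a::t2_space \<Rightarrow> 'b::real_normed_vector"
  assumes cU: "compact (UNIV::'a set)" and cE: "closed E" and cg: "continuous_on E g"
    and gb: "\<And>e. e \<in> E \<Longrightarrow> norm (g e) \<le> r" and "0 \<le> r"
  obtains h where "\<And>n. continuous_on UNIV (h n)" "\<And>n x. norm (h n x) \<le> (r + 1) / 2 ^ n"
    "\<And>n e. e \<in> E \<Longrightarrow> norm (g e - (\<Sum>k<n. h k e)) \<le> (r + 1) / 2 ^ n"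
proof -
  define b :: "nat \<Rightarrow> real" where "b n = (r + 1) / 2 ^ n" for n
  have "0 < b n" for n unfolding b_def using \<open>0 \<le> r\<close> by simp
  define P where "P f n \<longleftrightarrow> continuous_on E f \<and> (\<forall>e\<in>E. norm (f e) \<le> b n)"
    for f :: "'a \<Rightarrow> 'b" and n
  define Q where "Q f n h \<longleftrightarrow> continuous_on UNIV h \<and> (\<forall>x. norm (h x) \<le> b n) \<and>
      (\<forall>e\<in>E. norm (f e - h e) \<le> b (Suc n))" for f h :: "'a \<Rightarrow> 'b" and n
  have ex_Q: "\<exists>h. Q f n h" if "P f n" for f n
  proof -
    have "0 \<le> b n" using \<open>0 < b n\<close> by (rule less_imp_le)
    with that obtain h where "continuous_on UNIV h" "\<And>x. norm (h x) \<le> b n"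
        "\<And>e. e \<in> E \<Longrightarrow> norm (f e - h e) \<le> b (Suc n)"
      using continuous_approximation_closed[OF cU cE, of f "b n" "b (Suc n)"] \<open>0 < b (Suc n)\<close>
      unfolding P_def by blast
    then show ?thesis unfolding Q_def by blast
  qed
  define H where "H f n = (SOME h. Q f n h)" for f n
  have H: "Q f n (H f n)" if "P f n" for f n
    unfolding H_def by (rule someI_ex[OF ex_Q[OF that]])
  \<comment> \<open>rest n is what remains of g after n approximation steps; its bound halves at each step\<close>
  define rest where "rest = rec_nat g (\<lambda>n f e. f e - H f n e)"
  have rest_0: "rest 0 = g" and rest_Suc: "rest (Suc n) = (\<lambda>e. rest n e - H (rest n) n e)" for n
    by (simp_all add: rest_def)
  have P_rest: "P (rest n) n" for n
  proof (induction n)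
    case 0
    have "norm (g e) \<le> r + 1" if "e \<in> E" for e using gb[OF that] by linarith
    with cg show ?case unfolding P_def rest_0 b_def by simp
  next
    case (Suc n)
    then have "continuous_on E (H (rest n) n)" "\<forall>e\<in>E. norm (rest n e - H (rest n) n e) \<le> b (Suc n)"
      using H[OF Suc] continuous_on_subset[OF _ subset_UNIV] unfolding Q_def by blast+
    with Suc show ?case unfolding P_def rest_Suc by (simp add: continuous_on_diff)
  qed
  have partial_sums: "(\<Sum>k<n. H (rest k) k e) = g e - rest n e" for n e
    by (induction n) (simp_all add: rest_0 rest_Suc)
  show thesis
  proof (rule that)
    show "continuous_on UNIV (H (rest n) n)" for n using H[OF P_rest] unfolding Q_def by blast
    show "norm (H (rest n) n x) \<le> (r + 1) / 2 ^ n" for n x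
      using H[OF P_rest] unfolding Q_def b_def by blast
    show "norm (g e - (\<Sum>k<n. H (rest k) k e)) \<le> (r + 1) / 2 ^ n" if "e \<in> E" for n e
      using P_rest[of n] that unfolding partial_sums P_def b_def by simp
  qed
qed

lemma continuous_extension_closed:
  fixes g :: "'a::t2_space \<Rightarrow> 'b::banach"
  assumes cU: "compact (UNIV::'a set)" and cE: "closed E" and cg: "continuous_on E g"
    and gb: "\<And>e. e \<in> E \<Longrightarrow> norm (g e) \<le> r" and "0 \<le> r"
  obtains G where "continuous_on UNIV G" "\<And>e. e \<in> E \<Longrightarrow> G e = g e"
proof -
  obtain h where hc: "\<And>n. continuous_on UNIV (h n)" and hb: "\<And>n x. norm (h n x) \<le> (r + 1) / 2 ^ n"
      and approx: "\<And>n e. e \<in> E \<Longrightarrow> norm (g e - (\<Sum>k<n. h k e)) \<le> (r + 1) / 2 ^ n"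
    using continuous_approximation_sequence_closed[OF cU cE cg gb \<open>0 \<le> r\<close>] by blast
  have summable: "summable (\<lambda>n. (r + 1) / 2 ^ n)"
  proof -
    have "summable (\<lambda>n. (r + 1) * (1 / 2 :: real) ^ n)" by (intro summable_mult summable_geometric) simp
    then show ?thesis by (simp add: power_divide)
  qed
  have "uniform_limit UNIV (\<lambda>n x. \<Sum>k<n. h k x) (\<lambda>x. \<Sum>k. h k x) sequentially"
    by (rule Weierstrass_m_test[OF _ summable]) (use hb in auto)
  from uniform_limit_theorem[OF _ this] have "continuous_on UNIV (\<lambda>x. \<Sum>k. h k x)"
    by (auto intro!: always_eventually continuous_on_sum hc)
  moreover have "(\<Sum>k. h k e) = g e" if "e \<in> E" for e
  proof -
    have "(\<lambda>n. g e - (\<Sum>k<n. h k e)) \<longlonglongrightarrow> 0"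
      by (rule Lim_null_comparison[OF _ LIMSEQ_divide_realpow_zero[of 2 "r + 1"]])
        (use approx[OF that] in auto)
    then have "(\<lambda>k. h k e) sums g e"
      unfolding sums_def using tendsto_diff[OF tendsto_const[of "g e"]] by fastforce
    then show ?thesis by (rule sums_unique[symmetric])
  qed
  ultimately show thesis using that by blast
qed

lemma continuous_extension_closed_norm_le:
  fixes g :: "'a::t2_space \<Rightarrow> 'b::banach"
  assumes cU: "compact (UNIV::'a set)" and cE: "closed E" and cg: "continuous_on E g"
    and gb: "\<And>e. e \<in> E \<Longrightarrow> norm (g e) \<le> r" and "0 \<le> r"
  obtains G where "continuous_on UNIV G" "\<And>e. e \<in> E \<Longrightarrow> G e = g e" "\<And>x. norm (G x) \<le> r"
proof (cases "r = 0")
  case True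
  then show thesis using that[of "\<lambda>x. 0"] gb by auto
next
  case False
  then have "0 < r" using \<open>0 \<le> r\<close> by simp
  obtain G0 where G0: "continuous_on UNIV G0" "\<And>e. e \<in> E \<Longrightarrow> G0 e = g e"
    using continuous_extension_closed[OF cU cE cg gb \<open>0 \<le> r\<close>] by blast
  \<comment> \<open>compose with the radial retraction of the normed space onto the closed ball of radius r\<close>
  define G where "G x = (r / max r (norm (G0 x))) *\<^sub>R G0 x" for x
  have max_pos: "0 < max r (norm (G0 x))" for x using \<open>0 < r\<close> by simp
  show thesis
  proof (rule that)
    show "continuous_on UNIV G"
      unfolding G_def using max_pos by (intro continuous_intros G0(1)) (metis less_irrefl)
    show "G e = g e" if "e \<in> E" for e
      using that G0(2) gb[OF that] \<open>0 < r\<close> by (simp add: G_def max_def)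
    show "norm (G x) \<le> r" for x
    proof -
      have "norm (G x) = r * (norm (G0 x) / max r (norm (G0 x)))"
        unfolding G_def using \<open>0 < r\<close> max_pos[of x] by (simp add: abs_of_pos)
      also have "\<dots> \<le> r * 1"
        using \<open>0 < r\<close> max_pos[of x] by (intro mult_left_mono) (auto simp: field_simps)
      finally show ?thesis by simp
    qed
  qed
qed

section \<open>Compactness of operators induced by continuous families of functionals\<close>

lemma Cauchy_bcontfun_convergent:
  fixes f :: "nat \<Rightarrow> ('a::topological_space \<Rightarrow>\<^sub>C 'b::complete_space)"
  assumes "Cauchy f"
  shows "convergent f"
proof -
  obtain g where "uniform_limit UNIV f g sequentially"
    using \<open>Cauchy f\<close> uniformly_convergent_eq_cauchy[of "\<lambda>_. True" f]
    unfolding Cauchy_def uniform_limit_sequentially_iff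
    by (metis dist_fun_lt_imp_dist_val_lt)
  from uniform_limit_bcontfunE[OF this sequentially_bot]
  obtain l where "f \<longlonglongrightarrow> l" by metis
  then show ?thesis by (rule convergentI)
qed

lemma complete_closed_bcontfun:
  fixes S :: "('a::topological_space \<Rightarrow>\<^sub>C 'b::complete_space) set"
  assumes "closed S"
  shows "complete S"
proof (rule completeI)
  fix f :: "nat \<Rightarrow> ('a \<Rightarrow>\<^sub>C 'b)" assume f: "\<forall>n. f n \<in> S" "Cauchy f"
  then obtain l where l: "f \<longlonglongrightarrow> l" using Cauchy_bcontfun_convergent convergent_def by blast
  have "l \<in> S" by (rule closed_sequentially[OF assms _ l]) (use f in simp)
  with l show "\<exists>l\<in>S. f \<longlonglongrightarrow> l" by blast
qed

lemma bounded_imp_convergent_subsequence_finite: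
  fixes f :: "'i \<Rightarrow> nat \<Rightarrow> 'b::heine_borel"
  assumes "finite F" and "\<And>i. i \<in> F \<Longrightarrow> bounded (range (f i))"
  shows "\<exists>r. strict_mono r \<and> (\<forall>i\<in>F. convergent (f i \<circ> r))"
  using assms
proof (induction F rule: finite_induct)
  case empty
  show ?case using strict_mono_id by blast
next
  case (insert j F)
  then obtain r where r: "strict_mono r" "\<forall>i\<in>F. convergent (f i \<circ> r)" by blast
  have "bounded (range (f j \<circ> r))"
    by (rule bounded_subset[OF insert.prems[of j]]) auto
  from bounded_imp_convergent_subsequence[OF this]
  obtain l r' where r': "strict_mono r'" "(f j \<circ> r \<circ> r') \<longlonglongrightarrow> l" by blast
  have "convergent (f i \<circ> (r \<circ> r'))" if i: "i \<in> F" for i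
  proof -
    obtain L where "(f i \<circ> r) \<longlonglongrightarrow> L" using r(2) i by (auto simp: convergent_def)
    from LIMSEQ_subseq_LIMSEQ[OF this r'(1)] show ?thesis
      unfolding o_assoc by (rule convergentI)
  qed
  moreover have "convergent (f j \<circ> (r \<circ> r'))"
    using r'(2) unfolding o_assoc by (rule convergentI)
  ultimately show ?case using strict_mono_o[OF r(1) r'(1)] by blast
qed

lemma finite_net_if_no_separated_sequence:
  assumes close: "\<And>s :: nat \<Rightarrow> 'a. (\<And>n. s n \<in> A) \<Longrightarrow> \<exists>m n. m < n \<and> P (s n) (s m)"
  shows "\<exists>N. finite N \<and> N \<subseteq> A \<and> (\<forall>z\<in>A. \<exists>w\<in>N. P z w)"
proof (rule ccontr)
  assume no_net: "\<not> ?thesis"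
  let ?Q = "\<lambda>s n :: nat. \<lambda>z. z \<in> A \<and> (\<forall>m<n. \<not> P z (s m))"
  have "\<exists>s. \<forall>n. ?Q s n (s n)"
  proof (rule dependent_wellorder_choice)
    fix n s assume prev: "\<And>m. m < n \<Longrightarrow> ?Q s m (s m)"
    have "finite (s ` {..<n})" by simp
    moreover have "s ` {..<n} \<subseteq> A" using prev by blast
    ultimately have "\<not> (\<forall>z\<in>A. \<exists>w\<in>s ` {..<n}. P z w)" using no_net by metis
    then show "\<exists>z. ?Q s n z" by auto
  qed simp
  then obtain s where s: "\<forall>n. ?Q s n (s n)" ..
  then obtain m n where "m < n" "P (s n) (s m)" using close[of s] by blast
  with s show False by blast
qed

lemma finite_net_cball_finite_functionals:
  fixes F :: "('z::real_normed_vector \<Rightarrow>\<^sub>L real) set"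
  assumes "finite F" and "0 < \<epsilon>"
  shows "\<exists>N. finite N \<and> N \<subseteq> cball 0 1 \<and>
     (\<forall>z\<in>cball 0 1. \<exists>w\<in>N. \<forall>k\<in>F. \<bar>k z - k w\<bar> < \<epsilon>)"
proof (rule finite_net_if_no_separated_sequence)
  fix s :: "nat \<Rightarrow> 'z" assume s: "\<And>n. s n \<in> cball 0 1"
  have "bounded (range (\<lambda>n. k (s n)))" for k :: "'z \<Rightarrow>\<^sub>L real"
  proof (rule boundedI)
    fix y assume "y \<in> range (\<lambda>n. k (s n))"
    then obtain n where "y = k (s n)" by blast
    then have "norm y \<le> norm k * norm (s n)" using norm_blinfun[of k "s n"] by simp
    also have "\<dots> \<le> norm k" using s[of n] by (simp add: mult_left_le)
    finally show "norm y \<le> norm k" .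
  qed
  then obtain r where r: "strict_mono r" "\<forall>k\<in>F. convergent (\<lambda>n. k (s (r n)))"
    using bounded_imp_convergent_subsequence_finite[OF \<open>finite F\<close>, of "\<lambda>k n. k (s n)"]
    by (auto simp: o_def)
  have "\<forall>\<^sub>F n in sequentially. \<bar>k (s (r n)) - lim (\<lambda>n. k (s (r n)))\<bar> < \<epsilon> / 2" if "k \<in> F" for k
  proof -
    have "(\<lambda>n. k (s (r n))) \<longlonglongrightarrow> lim (\<lambda>n. k (s (r n)))"
      using r(2) that by (simp add: convergent_LIMSEQ_iff)
    then show ?thesis using \<open>0 < \<epsilon>\<close> unfolding tendsto_iff dist_real_def by (metis half_gt_zero)
  qed
  then have "\<forall>\<^sub>F n in sequentially. \<forall>k\<in>F. \<bar>k (s (r n)) - lim (\<lambda>n. k (s (r n)))\<bar> < \<epsilon> / 2"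
    by (rule eventually_ball_finite[OF \<open>finite F\<close>, rule_format])
  then obtain M where M: "\<And>n k. M \<le> n \<Longrightarrow> k \<in> F \<Longrightarrow> \<bar>k (s (r n)) - lim (\<lambda>n. k (s (r n)))\<bar> < \<epsilon> / 2"
    unfolding eventually_sequentially by blast
  have "\<bar>k (s (r (Suc M))) - k (s (r M))\<bar> < \<epsilon>" if "k \<in> F" for k
    using M[of M k] M[of "Suc M" k] that by linarith
  moreover have "r M < r (Suc M)" using r(1) by (simp add: strict_mono_Suc_iff)
  ultimately show "\<exists>m n. m < n \<and> (\<forall>k\<in>F. \<bar>k (s n) - k (s m)\<bar> < \<epsilon>)" by blast
qed

definition family_op :: "('a::topological_space \<Rightarrow> ('z::real_normed_vector \<Rightarrow>\<^sub>L real)) \<Rightarrow> 'z \<Rightarrow> ('a \<Rightarrow>\<^sub>C real)"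
  where "family_op \<Phi> z = Bcontfun (\<lambda>x. \<Phi> x z)"

context
  fixes \<Phi> :: "'a::topological_space \<Rightarrow> ('z::real_normed_vector \<Rightarrow>\<^sub>L real)" and M :: real
  assumes cont: "continuous_on UNIV \<Phi>" and bound: "\<And>x. norm (\<Phi> x) \<le> M"
begin

lemma family_op_apply: "apply_bcontfun (family_op \<Phi> z) x = \<Phi> x z"
proof -
  have "(\<lambda>x. \<Phi> x z) \<in> bcontfun"
  proof (rule bcontfun_normI)
    show "continuous_on UNIV (\<lambda>x. \<Phi> x z)"
      by (rule blinfun.continuous_on[OF cont continuous_on_const])
    show "norm (\<Phi> x z) \<le> M * norm z" for x
      using norm_blinfun[of "\<Phi> x" z] bound[of x] by (meson mult_right_mono norm_ge_zero order_trans)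
  qed
  then show ?thesis unfolding family_op_def by (simp add: Bcontfun_inverse)
qed

lemma norm_family_op_le: "norm (family_op \<Phi> z) \<le> M * norm z"
proof (rule norm_bound)
  show "norm (apply_bcontfun (family_op \<Phi> z) x) \<le> M * norm z" for x
    using norm_blinfun[of "\<Phi> x" z] bound[of x]
    by (simp add: family_op_apply) (meson mult_right_mono norm_ge_zero order_trans)
qed

lemma bounded_linear_family_op: "bounded_linear (family_op \<Phi>)"
proof (rule bounded_linear_intro[where K = M])
  show "family_op \<Phi> (z + w) = family_op \<Phi> z + family_op \<Phi> w" for z w
    by (rule bcontfun_eqI) (simp add: family_op_apply blinfun.add_right)
  show "family_op \<Phi> (c *\<^sub>R z) = c *\<^sub>R family_op \<Phi> z" for c z
    by (rule bcontfun_eqI) (simp add: family_op_apply blinfun.scaleR_right)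
  show "norm (family_op \<Phi> z) \<le> norm z * M" for z
    using norm_family_op_le[of z] by (simp add: mult.commute)
qed

lemma compact_op_family_op:
  assumes "compact (UNIV::'a set)"
  shows "compact_op (family_op \<Phi>)"
  unfolding compact_op_def compact_eq_totally_bounded
proof (intro conjI allI impI bounded_linear_family_op)
  let ?S = "family_op \<Phi>"
  show "complete (closure (?S ` cball 0 1))" by (rule complete_closed_bcontfun) simp
  fix \<epsilon> :: real assume "0 < \<epsilon>"
  define \<delta> where "\<delta> = \<epsilon> / 4"
  have "0 < \<delta>" using \<open>0 < \<epsilon>\<close> by (simp add: \<delta>_def)
  have "compact (range \<Phi>)" by (rule compact_continuous_image[OF cont assms])
  then obtain F where F: "finite F" "range \<Phi> \<subseteq> (\<Union>k\<in>F. ball k \<delta>)"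
    unfolding compact_eq_totally_bounded using \<open>0 < \<delta>\<close> by blast
  obtain N where N: "finite N" "N \<subseteq> cball 0 1"
      "\<And>z. z \<in> cball 0 1 \<Longrightarrow> \<exists>w\<in>N. \<forall>k\<in>F. \<bar>k z - k w\<bar> < \<delta>"
    using finite_net_cball_finite_functionals[OF F(1) \<open>0 < \<delta>\<close>] by blast
  \<comment> \<open>each functional is uniformly \<delta>-close to one in F, so the finite test set F controls S\<close>
  have close: "dist (?S w) (?S z) \<le> 3 * \<delta>"
    if z: "z \<in> cball 0 1" and w: "w \<in> cball 0 1" and zw: "\<forall>k\<in>F. \<bar>k z - k w\<bar> < \<delta>" for z w
  proof (rule dist_bound)
    fix x
    have "\<Phi> x \<in> (\<Union>k\<in>F. ball k \<delta>)" using F(2) by blast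
    then obtain k where k: "k \<in> F" "norm (\<Phi> x - k) < \<delta>"
      by (auto simp: dist_norm norm_minus_commute)
    have near: "\<bar>\<Phi> x u - k u\<bar> \<le> \<delta>" if "u \<in> cball 0 1" for u
    proof -
      have "\<bar>\<Phi> x u - k u\<bar> = norm ((\<Phi> x - k) u)" by (simp add: blinfun.diff_left)
      also have "\<dots> \<le> norm (\<Phi> x - k) * norm u" by (rule norm_blinfun)
      also have "\<dots> \<le> \<delta> * 1"
        using k(2) that \<open>0 < \<delta>\<close> by (intro mult_mono) (simp_all add: less_imp_le)
      finally show ?thesis by simp
    qed
    have "\<bar>k z - k w\<bar> < \<delta>" using zw k(1) by blast
    with near[OF z] near[OF w]
    show "dist (apply_bcontfun (?S w) x) (apply_bcontfun (?S z) x) \<le> 3 * \<delta>"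
      unfolding family_op_apply dist_real_def by linarith
  qed
  have "?S ` cball 0 1 \<subseteq> (\<Union>w\<in>N. cball (?S w) (3 * \<delta>))"
  proof
    fix y assume "y \<in> ?S ` cball 0 1"
    then obtain z where z: "z \<in> cball 0 1" "y = ?S z" by blast
    obtain w where "w \<in> N" "\<forall>k\<in>F. \<bar>k z - k w\<bar> < \<delta>" using N(3)[OF z(1)] by blast
    moreover from this N(2) have "dist (?S w) y \<le> 3 * \<delta>" using close[OF z(1)] z(2) by blast
    ultimately show "y \<in> (\<Union>w\<in>N. cball (?S w) (3 * \<delta>))" by auto
  qed
  then have "closure (?S ` cball 0 1) \<subseteq> (\<Union>w\<in>N. cball (?S w) (3 * \<delta>))"
    by (rule closure_minimal) (use N(1) in \<open>auto intro!: closed_UN\<close>)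
  also have "\<dots> \<subseteq> (\<Union>y\<in>?S ` N. ball y \<epsilon>)"
  proof -
    have "cball y (3 * \<delta>) \<subseteq> ball y \<epsilon>" for y
      using \<open>0 < \<epsilon>\<close> by (auto simp: \<delta>_def subset_eq)
    then show ?thesis by blast
  qed
  finally show "\<exists>k. finite k \<and> closure (?S ` cball 0 1) \<subseteq> (\<Union>y\<in>k. ball y \<epsilon>)"
    using N(1) by blast
qed

end

section \<open>Quotients of C(\<Omega>) by vanishing ideals\<close>

lemma mem_coset_iff: "f \<in> coset J c \<longleftrightarrow> f - c \<in> J"
  unfolding coset_def image_iff by (metis add_diff_cancel_left' diff_add_cancel add.commute)

lemma mem_coset_vanishing_ideal_iff:
  "f \<in> coset (vanishing_ideal E) c \<longleftrightarrow> (\<forall>e\<in>E. apply_bcontfun f e = apply_bcontfun c e)"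
  by (simp add: mem_coset_iff vanishing_ideal_def)

lemma coset_vanishing_ideal_eqI:
  assumes "\<And>e. e \<in> E \<Longrightarrow> apply_bcontfun f e = apply_bcontfun c e"
  shows "coset (vanishing_ideal E) f = coset (vanishing_ideal E) c"
  using assms by (auto simp: set_eq_iff mem_coset_vanishing_ideal_iff)

lemma qnorm_le: "a \<in> A \<Longrightarrow> qnorm A \<le> norm a"
  unfolding qnorm_def by (rule cINF_lower) (auto intro: bdd_belowI2[of _ 0])

lemma qnorm_ge: "A \<noteq> {} \<Longrightarrow> (\<And>a. a \<in> A \<Longrightarrow> c \<le> norm a) \<Longrightarrow> c \<le> qnorm A"
  unfolding qnorm_def by (rule cINF_greatest) auto

lemma qdist_ge:
  "A \<noteq> {} \<Longrightarrow> B \<noteq> {} \<Longrightarrow> (\<And>a b. a \<in> A \<Longrightarrow> b \<in> B \<Longrightarrow> c \<le> norm (a - b)) \<Longrightarrow> c \<le> qdist A B"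
  unfolding qdist_def by (rule cINF_greatest) auto

lemma abs_apply_bcontfun_le: "\<bar>apply_bcontfun (f :: 'a::topological_space \<Rightarrow>\<^sub>C real) x\<bar> \<le> norm f"
  using norm_bounded[of f x] by simp

lemma quot_opnorm_le_onorm:
  fixes S :: "'z::real_normed_vector \<Rightarrow> 'x::real_normed_vector"
  assumes "bounded_linear S" and "\<And>z. S z \<in> T z"
  shows "quot_opnorm T \<le> onorm S"
  unfolding quot_opnorm_def
proof (rule cSUP_least)
  fix z :: 'z assume "z \<in> cball 0 1"
  have "qnorm (T z) \<le> norm (S z)" by (rule qnorm_le[OF assms(2)])
  also have "\<dots> \<le> onorm S * norm z" by (rule onorm[OF assms(1)])
  also have "\<dots> \<le> onorm S * 1"
    using \<open>z \<in> cball 0 1\<close> onorm_pos_le[OF assms(1)] by (intro mult_left_mono) auto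
  finally show "qnorm (T z) \<le> onorm S" by simp
qed simp

lemma abs_le_mult_norm_if_homogeneous:
  fixes f :: "'z::real_normed_vector \<Rightarrow> real"
  assumes homogeneous: "\<And>a z. f (a *\<^sub>R z) = a * f z" and unit: "\<And>u. norm u \<le> 1 \<Longrightarrow> \<bar>f u\<bar> \<le> c"
  shows "\<bar>f z\<bar> \<le> c * norm z"
proof (cases "z = 0")
  case True
  then show ?thesis using homogeneous[of 0 0] by simp
next
  case False
  define u where "u = (1 / norm z) *\<^sub>R z"
  have "norm u \<le> 1" using False by (simp add: u_def)
  have "f z = norm z * f u" using homogeneous False by (metis u_def scaleR_one divide_self_if
      norm_eq_zero scaleR_scaleR times_divide_eq_right mult.right_neutral)
  then have "\<bar>f z\<bar> = norm z * \<bar>f u\<bar>" by (simp add: abs_mult)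
  also have "\<dots> \<le> norm z * c" using unit[OF \<open>norm u \<le> 1\<close>] by (simp add: mult_left_mono)
  finally show ?thesis by (simp add: mult.commute)
qed

definition rep :: "('z \<Rightarrow> 'x set) \<Rightarrow> 'z \<Rightarrow> 'x" where
  "rep T z = (SOME f. f \<in> T z)"

definition point_functional ::
    "('z::real_normed_vector \<Rightarrow> ('a::topological_space \<Rightarrow>\<^sub>C real) set) \<Rightarrow> 'a \<Rightarrow> ('z \<Rightarrow>\<^sub>L real)"
  where "point_functional T e = Blinfun (\<lambda>z. rep T z e)"

context
  fixes E :: "'a::topological_space set" and T :: "'z::real_normed_vector \<Rightarrow> ('a \<Rightarrow>\<^sub>C real) set"
  assumes qc: "quot_compact_op (vanishing_ideal E) T"
begin

lemma T_linear: "quot_linear (vanishing_ideal E) T"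
  using qc by (simp add: quot_compact_op_def)

lemma T_eq_coset: "\<exists>c. T z = coset (vanishing_ideal E) c"
proof -
  have "T z \<in> range (coset (vanishing_ideal E))"
    using T_linear unfolding quot_linear_def by simp
  then show ?thesis by (auto simp: image_iff)
qed

lemma T_nonempty: "T z \<noteq> {}"
  using T_eq_coset[of z] mem_coset_vanishing_ideal_iff by blast

lemma rep_mem: "rep T z \<in> T z"
  unfolding rep_def using T_nonempty[of z] by (simp add: some_in_eq)

lemma mem_T_agree: "f \<in> T z \<Longrightarrow> g \<in> T z \<Longrightarrow> e \<in> E \<Longrightarrow> apply_bcontfun f e = apply_bcontfun g e"
  using T_eq_coset[of z] mem_coset_vanishing_ideal_iff by metis

lemma coset_eq_T_if_agrees_with_rep:
  assumes "\<And>e. e \<in> E \<Longrightarrow> apply_bcontfun f e = rep T z e"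
  shows "coset (vanishing_ideal E) f = T z"
proof -
  obtain c where c: "T z = coset (vanishing_ideal E) c" using T_eq_coset by blast
  have "rep T z e = c e" if "e \<in> E" for e
    using rep_mem[of z] that unfolding c mem_coset_vanishing_ideal_iff by blast
  then show ?thesis unfolding c using assms by (intro coset_vanishing_ideal_eqI) simp
qed

lemma rep_linear: "e \<in> E \<Longrightarrow> rep T (a *\<^sub>R z + b *\<^sub>R w) e = a * rep T z e + b * rep T w e"
proof -
  assume "e \<in> E"
  have "a *\<^sub>R rep T z + b *\<^sub>R rep T w \<in> T (a *\<^sub>R z + b *\<^sub>R w)"
    using T_linear rep_mem unfolding quot_linear_def by simp
  from mem_T_agree[OF rep_mem this \<open>e \<in> E\<close>] show ?thesis by simp
qed

lemma abs_rep_le_qnorm: "e \<in> E \<Longrightarrow> \<bar>rep T z e\<bar> \<le> qnorm (T z)"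
proof (rule qnorm_ge[OF T_nonempty])
  fix a assume "e \<in> E" "a \<in> T z"
  then have "rep T z e = a e" using mem_T_agree rep_mem by blast
  then show "\<bar>rep T z e\<bar> \<le> norm a" using abs_apply_bcontfun_le by metis
qed

lemma abs_rep_diff_le_qdist:
  assumes "e \<in> E"
  shows "\<bar>rep T z e - apply_bcontfun l e\<bar> \<le> qdist (T z) (coset (vanishing_ideal E) l)"
proof (rule qdist_ge[OF T_nonempty])
  show "coset (vanishing_ideal E) l \<noteq> {}" using mem_coset_vanishing_ideal_iff by blast
  fix a b assume a: "a \<in> T z" and b: "b \<in> coset (vanishing_ideal E) l"
  have "rep T z e - apply_bcontfun l e = apply_bcontfun (a - b) e"
    using mem_T_agree[OF rep_mem a assms] b assms by (simp add: mem_coset_vanishing_ideal_iff)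
  then show "\<bar>rep T z e - apply_bcontfun l e\<bar> \<le> norm (a - b)" using abs_apply_bcontfun_le by metis
qed

lemma qnorm_le_qdist_add_norm: "qnorm (T z) \<le> qdist (T z) (coset (vanishing_ideal E) l) + norm l"
proof -
  have "qnorm (T z) - norm l \<le> qdist (T z) (coset (vanishing_ideal E) l)"
  proof (rule qdist_ge[OF T_nonempty])
    show "coset (vanishing_ideal E) l \<noteq> {}" using mem_coset_vanishing_ideal_iff by blast
    fix a b assume a: "a \<in> T z" and b: "b \<in> coset (vanishing_ideal E) l"
    obtain c where c: "T z = coset (vanishing_ideal E) c" using T_eq_coset by blast
    have "a - (b - l) \<in> T z"
      using a b unfolding c mem_coset_vanishing_ideal_iff by simp
    then have "qnorm (T z) \<le> norm ((a - b) + l)" by (simp add: qnorm_le algebra_simps)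
    also have "\<dots> \<le> norm (a - b) + norm l" by (rule norm_triangle_ineq)
    finally show "qnorm (T z) - norm l \<le> norm (a - b)" by simp
  qed
  then show ?thesis by simp
qed

lemma convergent_subsequence_T:
  fixes s :: "nat \<Rightarrow> 'z"
  assumes "\<And>n. norm (s n) \<le> 1"
  obtains r l where "strict_mono r" "(\<lambda>n. qdist (T (s (r n))) (coset (vanishing_ideal E) l)) \<longlonglongrightarrow> 0"
proof -
  obtain r L where r: "strict_mono r" "L \<in> range (coset (vanishing_ideal E))"
      "(\<lambda>n. qdist (T (s (r n))) L) \<longlonglongrightarrow> 0"
    using qc assms unfolding quot_compact_op_def by blast
  from r(2) obtain l where "L = coset (vanishing_ideal E) l" by blast
  with r show ?thesis by (intro that[of r l]) simp_all
qed

lemma bdd_above_qnorm_T: "bdd_above ((\<lambda>z. qnorm (T z)) ` cball 0 1)"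
proof (rule ccontr)
  assume unbounded: "\<not> ?thesis"
  have "\<forall>n::nat. \<exists>z. norm z \<le> 1 \<and> real n < qnorm (T z)"
  proof
    fix n :: nat
    have "\<not> (\<forall>z\<in>cball 0 1. qnorm (T z) \<le> real n)" using unbounded unfolding bdd_above_def by auto
    then show "\<exists>z. norm z \<le> 1 \<and> real n < qnorm (T z)" by (auto simp: not_le)
  qed
  then obtain s where "\<forall>n. norm (s n) \<le> 1 \<and> real n < qnorm (T (s n))"
    by (rule choice[THEN exE])
  then have s: "\<And>n. norm (s n) \<le> 1" "\<And>n. real n < qnorm (T (s n))" by simp_all
  obtain r l where r: "strict_mono r"
      and lim: "(\<lambda>n. qdist (T (s (r n))) (coset (vanishing_ideal E) l)) \<longlonglongrightarrow> 0"
    by (rule convergent_subsequence_T[OF s(1)])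
  obtain N where N: "\<And>n. N \<le> n \<Longrightarrow> qdist (T (s (r n))) (coset (vanishing_ideal E) l) < 1"
    using order_tendstoD(2)[OF lim zero_less_one] unfolding eventually_sequentially by blast
  define n where "n = max N (nat \<lceil>1 + norm l\<rceil>)"
  have "real (r n) < qnorm (T (s (r n)))" by (rule s(2))
  also have "\<dots> \<le> qdist (T (s (r n))) (coset (vanishing_ideal E) l) + norm l"
    by (rule qnorm_le_qdist_add_norm)
  also have "\<dots> < 1 + norm l" using N[of n] by (simp add: n_def)
  also have "\<dots> \<le> real n" unfolding n_def by linarith
  also have "\<dots> \<le> real (r n)" using seq_suble[OF r] by simp
  finally show False by simp
qed

lemma qnorm_le_quot_opnorm: "norm z \<le> 1 \<Longrightarrow> qnorm (T z) \<le> quot_opnorm T"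
  unfolding quot_opnorm_def by (rule cSUP_upper[OF _ bdd_above_qnorm_T]) simp

lemma quot_opnorm_nonneg: "0 \<le> quot_opnorm T"
  using qnorm_ge[OF T_nonempty, of 0 0] qnorm_le_quot_opnorm[of 0] by simp

lemma abs_rep_le: "e \<in> E \<Longrightarrow> \<bar>rep T z e\<bar> \<le> quot_opnorm T * norm z"
proof (rule abs_le_mult_norm_if_homogeneous[where f = "\<lambda>z. rep T z e"])
  assume "e \<in> E"
  show "rep T (a *\<^sub>R z) e = a * rep T z e" for a z
    using rep_linear[OF \<open>e \<in> E\<close>, of a z 0 z] by simp
  show "\<bar>rep T u e\<bar> \<le> quot_opnorm T" if "norm u \<le> 1" for u
    using abs_rep_le_qnorm[OF \<open>e \<in> E\<close>, of u] qnorm_le_quot_opnorm[OF that] by linarith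
qed

lemma finite_net_rep:
  assumes "0 < \<epsilon>"
  shows "\<exists>N. finite N \<and> N \<subseteq> cball 0 1 \<and>
    (\<forall>z\<in>cball 0 1. \<exists>w\<in>N. \<forall>e\<in>E. \<bar>rep T z e - rep T w e\<bar> < \<epsilon>)"
proof (rule finite_net_if_no_separated_sequence)
  fix s :: "nat \<Rightarrow> 'z" assume "\<And>n. s n \<in> cball 0 1"
  then have "norm (s n) \<le> 1" for n by simp
  then obtain r l where r: "strict_mono r"
      and lim: "(\<lambda>n. qdist (T (s (r n))) (coset (vanishing_ideal E) l)) \<longlonglongrightarrow> 0"
    by (rule convergent_subsequence_T)
  obtain N where N: "\<And>n. N \<le> n \<Longrightarrow> qdist (T (s (r n))) (coset (vanishing_ideal E) l) < \<epsilon> / 2"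
    using order_tendstoD(2)[OF lim, of "\<epsilon> / 2"] \<open>0 < \<epsilon>\<close> unfolding eventually_sequentially by auto
  have near_l: "\<bar>rep T (s (r n)) e - l e\<bar> < \<epsilon> / 2" if "N \<le> n" "e \<in> E" for n e
    using abs_rep_diff_le_qdist[OF that(2)] N[OF that(1)] by (rule le_less_trans)
  have "\<forall>e\<in>E. \<bar>rep T (s (r (Suc N))) e - rep T (s (r N)) e\<bar> < \<epsilon>"
  proof
    fix e assume "e \<in> E"
    from near_l[OF le_refl this] near_l[OF le_SucI[OF le_refl] this]
    show "\<bar>rep T (s (r (Suc N))) e - rep T (s (r N)) e\<bar> < \<epsilon>" by linarith
  qed
  moreover have "r N < r (Suc N)" using r by (simp add: strict_mono_Suc_iff)
  ultimately show "\<exists>m n. m < n \<and> (\<forall>e\<in>E. \<bar>rep T (s n) e - rep T (s m) e\<bar> < \<epsilon>)" by blast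
qed

lemma bounded_linear_rep_at: "e \<in> E \<Longrightarrow> bounded_linear (\<lambda>z. rep T z e)"
proof (rule bounded_linear_intro[where K = "quot_opnorm T"])
  assume "e \<in> E"
  show "rep T (z + w) e = rep T z e + rep T w e" for z w
    using rep_linear[OF \<open>e \<in> E\<close>, of 1 z 1 w] by simp
  show "rep T (a *\<^sub>R z) e = a *\<^sub>R rep T z e" for a z
    using rep_linear[OF \<open>e \<in> E\<close>, of a z 0 z] by simp
  show "norm (rep T z e) \<le> norm z * quot_opnorm T" for z
    using abs_rep_le[OF \<open>e \<in> E\<close>, of z] by (simp add: mult.commute)
qed

lemma point_functional_apply: "e \<in> E \<Longrightarrow> point_functional T e z = rep T z e"
  unfolding point_functional_def using bounded_linear_Blinfun_apply[OF bounded_linear_rep_at] by simp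

lemma norm_point_functional_le:
  assumes "e \<in> E"
  shows "norm (point_functional T e) \<le> quot_opnorm T"
proof (rule norm_blinfun_bound[OF quot_opnorm_nonneg])
  show "norm (point_functional T e z) \<le> quot_opnorm T * norm z" for z
    using abs_rep_le[OF assms, of z] by (simp add: point_functional_apply[OF assms])
qed

lemma continuous_on_point_functional: "continuous_on E (point_functional T)"
  unfolding continuous_on_topological
proof (intro ballI allI impI)
  fix x0 B assume x0: "x0 \<in> E" and "open B" "point_functional T x0 \<in> B"
  then obtain \<epsilon> where "0 < \<epsilon>" and \<epsilon>B: "ball (point_functional T x0) \<epsilon> \<subseteq> B"
    using openE by metis
  obtain N where N: "finite N"
      "\<And>z. z \<in> cball 0 1 \<Longrightarrow> \<exists>w\<in>N. \<forall>e\<in>E. \<bar>rep T z e - rep T w e\<bar> < \<epsilon> / 4"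
    using finite_net_rep[of "\<epsilon> / 4"] \<open>0 < \<epsilon>\<close> by auto
  \<comment> \<open>near x0 all representatives in the finite net are close to their values at x0\<close>
  define A where "A = (\<Inter>w\<in>N. {y. \<bar>rep T w y - rep T w x0\<bar> < \<epsilon> / 4})"
  show "\<exists>A. open A \<and> x0 \<in> A \<and> (\<forall>y\<in>E. y \<in> A \<longrightarrow> point_functional T y \<in> B)"
  proof (intro exI conjI ballI impI)
    show "open A" unfolding A_def
      by (intro open_INT N(1) ballI open_Collect_less continuous_intros continuous_on_apply_bcontfun)
    show "x0 \<in> A" unfolding A_def using \<open>0 < \<epsilon>\<close> by simp
    fix y assume y: "y \<in> E" "y \<in> A"
    have "\<bar>rep T z y - rep T z x0\<bar> \<le> (3 * \<epsilon> / 4) * norm z" for z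
    proof (rule abs_le_mult_norm_if_homogeneous[where f = "\<lambda>z. rep T z y - rep T z x0"])
      show "rep T (a *\<^sub>R z) y - rep T (a *\<^sub>R z) x0 = a * (rep T z y - rep T z x0)" for a z
        using rep_linear[OF y(1), of a z 0 z] rep_linear[OF x0, of a z 0 z] by (simp add: algebra_simps)
      fix u :: 'z assume "norm u \<le> 1"
      then obtain w where w: "w \<in> N" "\<forall>e\<in>E. \<bar>rep T u e - rep T w e\<bar> < \<epsilon> / 4"
        using N(2) by auto
      have "\<bar>rep T u y - rep T w y\<bar> < \<epsilon> / 4" using w(2) y(1) by blast
      moreover have "\<bar>rep T u x0 - rep T w x0\<bar> < \<epsilon> / 4" using w(2) x0 by blast
      moreover have "\<bar>rep T w y - rep T w x0\<bar> < \<epsilon> / 4" using y(2) w(1) unfolding A_def by blast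
      ultimately show "\<bar>rep T u y - rep T u x0\<bar> \<le> 3 * \<epsilon> / 4" by linarith
    qed
    then have "norm (point_functional T y - point_functional T x0) \<le> 3 * \<epsilon> / 4"
      using \<open>0 < \<epsilon>\<close>
      by (intro norm_blinfun_bound) (simp_all add: blinfun.diff_left point_functional_apply y(1) x0)
    then have "point_functional T y \<in> ball (point_functional T x0) \<epsilon>"
      using \<open>0 < \<epsilon>\<close> by (simp add: dist_norm norm_minus_commute)
    then show "point_functional T y \<in> B" using \<epsilon>B by blast
  qed
qed

end

theorem mainTheorem1:
  fixes E :: "'a::t2_space set"
    and T :: "'z::banach \<Rightarrow> ('a \<Rightarrow>\<^sub>C real) set"
  assumes "compact (UNIV :: 'a set)"
    and "closed E"
    and "quot_compact_op (vanishing_ideal E) T"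
  shows "\<exists>S :: 'z \<Rightarrow> ('a \<Rightarrow>\<^sub>C real).
           compact_op S \<and>
           (\<forall>z. coset (vanishing_ideal E) (S z) = T z) \<and>
           onorm S = quot_opnorm T"
proof -
  obtain \<Phi> where \<Phi>_cont: "continuous_on UNIV \<Phi>" and \<Phi>_ext: "\<And>e. e \<in> E \<Longrightarrow> \<Phi> e = point_functional T e"
      and \<Phi>_norm: "\<And>x. norm (\<Phi> x) \<le> quot_opnorm T"
    using continuous_extension_closed_norm_le[OF assms(1,2) continuous_on_point_functional[OF assms(3)]
        norm_point_functional_le[OF assms(3)] quot_opnorm_nonneg[OF assms(3)]] by blast
  define S where "S = family_op \<Phi>"
  have cosets: "coset (vanishing_ideal E) (S z) = T z" for z
    by (rule coset_eq_T_if_agrees_with_rep[OF assms(3)])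
      (simp add: S_def family_op_apply[OF \<Phi>_cont \<Phi>_norm] \<Phi>_ext point_functional_apply[OF assms(3)])
  have "S z \<in> T z" for z
    using cosets[of z] mem_coset_vanishing_ideal_iff by blast
  then have "quot_opnorm T \<le> onorm S"
    unfolding S_def by (rule quot_opnorm_le_onorm[OF bounded_linear_family_op[OF \<Phi>_cont \<Phi>_norm]])
  moreover have "onorm S \<le> quot_opnorm T"
    unfolding S_def using quot_opnorm_nonneg[OF assms(3)]
    by (rule onorm_bound) (rule norm_family_op_le[OF \<Phi>_cont \<Phi>_norm])
  moreover have "compact_op S"
    unfolding S_def by (rule compact_op_family_op[OF \<Phi>_cont \<Phi>_norm assms(1)])
  ultimately show ?thesis using cosets by (intro exI[of _ S]) auto
qed

end
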